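(* Let $K=K_1\times\cdots\times K_n$ be a product of CM fields, let $\alpha=(\alpha_1,\dots,\alpha_n)\in K$, and let $g_i\in\mathbb{Z}[x]$ be the minimal polynomial of $\alpha_i+\overline{\alpha}_i$. Then $\alpha$ is a Weil generator for $K$ if and only if (i) each $\alpha_i$ is a Weil generator for $K_i$, (ii) $\alpha_1\overline{\alpha}_1=\cdots=\alpha_n\overline{\alpha}_n$, and (iii) $|\operatorname{Res}(g_i,g_j)|=1$ for all $i\neq j$.
   Context: For a product of CM fields $K=K_1\times\cdots\times K_n$ (with componentwise CM involution $\overline{\cdot}$), an element $\alpha\in K$ is a Weil generator for $K$ if $\alpha\overline{\alpha}$ lies in the image of the diagonal embedding $\mathbb{Z}\to K$ and $\mathbb{Z}[\alpha,\overline{\alpha}]=\mathcal{O}_K:=\prod_i\mathcal{O}_{K_i}$. $\operatorname{Res}$ denotes the resultant. *)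

theory Defs
  imports Complex_Main "HOL-Computational_Algebra.Polynomial_Factorial" "Subresultants.Resultant_Prelim"
begin

text \<open>Number fields are modelled as subfields of the complex numbers that are
  finite-dimensional over the rationals.\<close>

definition subfield_C :: "complex set \<Rightarrow> bool" where
  "subfield_C K \<longleftrightarrow> 0 \<in> K \<and> 1 \<in> K \<and>
     (\<forall>x\<in>K. \<forall>y\<in>K. x + y \<in> K \<and> x * y \<in> K) \<and>
     (\<forall>x\<in>K. - x \<in> K \<and> inverse x \<in> K)"

definition number_field :: "complex set \<Rightarrow> bool" where
  "number_field K \<longleftrightarrow> subfield_C K \<and>
     (\<exists>B. finite B \<and> B \<subseteq> K \<and> (\<forall>x\<in>K. \<exists>c. x = (\<Sum>b\<in>B. of_rat (c b) * b)))"

definition field_embedding :: "complex set \<Rightarrow> (complex \<Rightarrow> complex) \<Rightarrow> bool" where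
  "field_embedding K \<sigma> \<longleftrightarrow> \<sigma> 1 = 1 \<and>
     (\<forall>x\<in>K. \<forall>y\<in>K. \<sigma> (x + y) = \<sigma> x + \<sigma> y \<and> \<sigma> (x * y) = \<sigma> x * \<sigma> y)"

text \<open>For a CM field inside the complex numbers the CM involution
  is necessarily the restriction of complex conjugation.\<close>
definition CM_field :: "complex set \<Rightarrow> bool" where
  "CM_field K \<longleftrightarrow> number_field K \<and> (\<forall>x\<in>K. cnj x \<in> K) \<and> (\<exists>x\<in>K. x \<notin> \<real>) \<and>
     (\<forall>\<sigma>. field_embedding K \<sigma> \<longrightarrow> (\<forall>x\<in>K. \<sigma> (cnj x) = cnj (\<sigma> x)))"

definition alg_integer :: "complex \<Rightarrow> bool" where
  "alg_integer x \<longleftrightarrow> (\<exists>p :: int poly. lead_coeff p = 1 \<and> poly (map_poly of_int p) x = 0)"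

definition ring_of_integers :: "complex set \<Rightarrow> complex set" where
  "ring_of_integers K = {x \<in> K. alg_integer x}"

definition int_alg2 :: "complex \<Rightarrow> complex \<Rightarrow> complex set" where
  "int_alg2 a b = {y. \<exists>N (c :: nat \<Rightarrow> nat \<Rightarrow> int).
      y = (\<Sum>i<N. \<Sum>j<N. of_int (c i j) * a ^ i * b ^ j)}"

definition weil_generator :: "complex set \<Rightarrow> complex \<Rightarrow> bool" where
  "weil_generator K a \<longleftrightarrow> a \<in> K \<and> a * cnj a \<in> \<int> \<and> int_alg2 a (cnj a) = ring_of_integers K"

text \<open>Product K_0 x ... x K_(n-1): elements are functions nat => complex with value 0
  outside {0..<n}; operations and conjugation are componentwise.\<close>
definition prod_ring_of_integers :: "nat \<Rightarrow> (nat \<Rightarrow> complex set) \<Rightarrow> (nat \<Rightarrow> complex) set" where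
  "prod_ring_of_integers n K =
     {x. (\<forall>k<n. x k \<in> ring_of_integers (K k)) \<and> (\<forall>k\<ge>n. x k = 0)}"

definition prod_int_alg2 :: "nat \<Rightarrow> (nat \<Rightarrow> complex) \<Rightarrow> (nat \<Rightarrow> complex) set" where
  "prod_int_alg2 n \<alpha> = {x. \<exists>N (c :: nat \<Rightarrow> nat \<Rightarrow> int). x = (\<lambda>k. if k < n then
      (\<Sum>i<N. \<Sum>j<N. of_int (c i j) * \<alpha> k ^ i * cnj (\<alpha> k) ^ j) else 0)}"

definition weil_generator_prod :: "nat \<Rightarrow> (nat \<Rightarrow> complex set) \<Rightarrow> (nat \<Rightarrow> complex) \<Rightarrow> bool" where
  "weil_generator_prod n K \<alpha> \<longleftrightarrow> (\<forall>k<n. \<alpha> k \<in> K k) \<and>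
     (\<exists>q :: int. \<forall>k<n. \<alpha> k * cnj (\<alpha> k) = of_int q) \<and>
     prod_int_alg2 n \<alpha> = prod_ring_of_integers n K"

definition is_min_int_poly :: "int poly \<Rightarrow> complex \<Rightarrow> bool" where
  "is_min_int_poly p x \<longleftrightarrow> irreducible p \<and> lead_coeff p > 0 \<and> poly (map_poly of_int p) x = 0"

end

(*
  Write b = a + cnj a. When a * cnj a is an integer q, we have cnj a = b - a and
  a^2 = b a - q, so Z[a, cnj a] = Z[b] + Z[b] a, componentwise and in the product.

  If a is a Weil generator of the product, projecting gives (i) and (ii). The idempotent e_i
  of the product has the form P(b) + Q(b) a, and since no a_k is real, Q(b_k) = 0; so
  P(b_i) = 1 and P(b_j) = 0, whence g_i divides P - 1 and g_j divides P. This is a Bezout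
  relation with g_i monic (b_i is an algebraic integer), and it makes the Sylvester matrix
  of g_i and g_j invertible over Z, so the resultant is a unit.

  Conversely, u g_i + v g_j = Res(g_i, g_j) = +-1 yields integer polynomials separating b_i
  from b_j; their products are idempotents which glue the componentwise representations
  P_k(b_k) + Q_k(b_k) a_k into one, as in the Chinese remainder theorem.
*)

theory Submission
  imports Defs Subresultants.Subresultant_Gcd
begin

section \<open>Resultants and Bezout identities\<close>

definition sylvester_row :: "'a::comm_ring_1 poly \<Rightarrow> 'a poly \<Rightarrow> nat \<Rightarrow> 'a poly" where
  "sylvester_row f g i = (if i < degree g then monom 1 (degree g - i) * f
                          else monom 1 (degree f + degree g - i) * g)"

lemma sylvester_mat_eq_coeff_sylvester_row:
  assumes "i < degree f + degree g" "j < degree f + degree g"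
  shows "sylvester_mat f g $$ (i,j) = coeff (sylvester_row f g i) (degree f + degree g - j)"
  using sylvester_index_mat2[OF assms] unfolding sylvester_row_def by simp

lemma degree_sylvester_row_le:
  assumes "i < degree f + degree g"
  shows "degree (sylvester_row f g i) \<le> degree f + degree g"
proof -
  have "degree (monom (1::'a) k * h) \<le> k + degree h" for k and h :: "'a poly"
    by (metis add_le_mono1 degree_monom_le degree_mult_le order_trans)
  from this[of "degree g - i" f] this[of "degree f + degree g - i" g] show ?thesis
    using assms unfolding sylvester_row_def by auto
qed

lemma sum_smult_sylvester_row:
  fixes f g :: "'a::comm_ring_1 poly"
  defines "D \<equiv> degree f + degree g"
  shows "(\<Sum>i<D. smult (r i) (sylvester_row f g i)) =
    monom 1 1 * ((\<Sum>i<degree g. monom (r i) (degree g - 1 - i)) * f +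
             (\<Sum>i\<in>{degree g..<D}. monom (r i) (D - 1 - i)) * g)"
proof -
  have shift: "smult c (monom 1 (Suc k) * h) = monom 1 1 * (monom c k * h)" for c k and h :: "'a poly"
    by (simp add: mult_monom mult_smult_left[symmetric] smult_monom flip: mult.assoc)
  have split: "{..<D} = {..<degree g} \<union> {degree g..<D}" unfolding D_def by auto
  have "sylvester_row f g i = monom 1 (Suc (degree g - 1 - i)) * f" if "i < degree g" for i
    using that by (simp add: sylvester_row_def Suc_diff_Suc)
  then have "(\<Sum>i<degree g. smult (r i) (sylvester_row f g i)) =
        (\<Sum>i<degree g. monom 1 1 * (monom (r i) (degree g - 1 - i) * f))"
    by (intro sum.cong refl) (simp only: shift lessThan_iff)
  moreover have "sylvester_row f g i = monom 1 (Suc (D - 1 - i)) * g"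
    if "i \<in> {degree g..<D}" for i
    using that by (simp add: sylvester_row_def Suc_diff_Suc D_def)
  then have "(\<Sum>i\<in>{degree g..<D}. smult (r i) (sylvester_row f g i)) =
        (\<Sum>i\<in>{degree g..<D}. monom 1 1 * (monom (r i) (D - 1 - i) * g))"
    by (intro sum.cong refl) (simp only: shift)
  ultimately show ?thesis
    unfolding split by (subst sum.union_disjoint) (auto simp: sum_distrib_right sum_distrib_left distrib_left)
qed

lemma coeff_sum_smult_sylvester_row:
  assumes "j < degree f + degree g"
  shows "coeff (\<Sum>i<degree f + degree g. smult (r i) (sylvester_row f g i)) (degree f + degree g - j)
       = (\<Sum>i<degree f + degree g. r i * sylvester_mat f g $$ (i,j))"
  unfolding coeff_sum coeff_smult using sylvester_mat_eq_coeff_sylvester_row[OF _ assms]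
  by (intro sum.cong) auto

lemma sum_monom_coeff_reversed:
  assumes "\<And>i. i \<ge> m \<Longrightarrow> coeff v i = 0"
  shows "(\<Sum>i\<in>{n..<m+n}. monom (coeff v (m + n - 1 - i)) (m + n - 1 - i)) = v"
proof -
  have "(\<Sum>i\<in>{n..<m+n}. monom (coeff v (m + n - 1 - i)) (m + n - 1 - i)) = (\<Sum>k<m. monom (coeff v k) k)"
    by (rule sum.reindex_bij_witness[where i="\<lambda>k. m + n - 1 - k" and j="\<lambda>i. m + n - 1 - i"]) auto
  also have "\<dots> = v"
    by (rule poly_eqI) (use assms in \<open>auto simp: coeff_sum coeff_monom\<close>)
  finally show ?thesis .
qed

lemma resultant_bezout:
  fixes f g :: "'a::comm_ring_1 poly"
  assumes "degree f + degree g > 0"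
  obtains u v where "u * f + v * g = [:resultant f g:]"
proof -
  define D where "D = degree f + degree g"
  define S where "S = sylvester_mat f g"
  have S: "S \<in> carrier_mat D D" unfolding S_def D_def by (rule sylvester_carrier_mat)
  \<comment> \<open>The last row of the adjugate combines the rows of S into det S times the last
    unit vector; read as polynomials, into det S times x.\<close>
  define r where "r i = adj_mat S $$ (D - 1, i)" for i
  have last: "D - 1 < D" using assms unfolding D_def by simp
  have rS: "(\<Sum>i<D. r i * S $$ (i,j)) = (if j = D - 1 then det S else 0)" if "j < D" for j
  proof -
    have "(\<Sum>i<D. r i * S $$ (i,j)) = (adj_mat S * S) $$ (D - 1, j)"
      using adj_mat(1)[OF S] S last that unfolding r_def
      by (simp add: scalar_prod_def lessThan_atLeast0)
    then show ?thesis using adj_mat(3)[OF S] last that by simp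
  qed
  define P where "P = (\<Sum>i<D. smult (r i) (sylvester_row f g i))"
  obtain u v where uv: "P = monom 1 1 * (u * f + v * g)"
    unfolding P_def D_def using sum_smult_sylvester_row by blast
  have "P = monom (det S) 1"
  proof (rule poly_eqI)
    fix t
    consider "t = 0" | "t > D" | "0 < t" "t \<le> D" by linarith
    then show "coeff P t = coeff (monom (det S) 1) t"
    proof cases
      case 1
      then show ?thesis by (simp add: uv coeff_monom_mult)
    next
      case 2
      have "degree P \<le> D"
        unfolding P_def D_def by (intro degree_sum_le) (auto intro: order_trans[OF degree_smult_le] degree_sylvester_row_le)
      with 2 show ?thesis using last by (auto simp: coeff_eq_0 coeff_monom)
    next
      case 3
      then have "coeff P t = (\<Sum>i<D. r i * S $$ (i, D - t))"
        using coeff_sum_smult_sylvester_row[of "D - t" f g r] unfolding P_def S_def D_def by simp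
      with 3 show ?thesis using rS[of "D - t"] by (auto simp: coeff_monom)
    qed
  qed
  then have "monom 1 1 * (u * f + v * g) = monom 1 1 * [:det S:]"
    using uv by (simp add: smult_monom mult.commute[of "monom 1 (Suc 0)"])
  then show ?thesis
    using that unfolding resultant_def S_def by (simp add: monom_Suc)
qed

lemma det_dvd_1_if_unit_vectors_in_row_span:
  fixes A :: "'a::comm_ring_1 mat"
  assumes A: "A \<in> carrier_mat n n"
    and span: "\<And>j'. j' < n \<Longrightarrow>
      \<exists>r. \<forall>j<n. (\<Sum>i<n. r i * A $$ (i,j)) = (if j = j' then 1 else 0)"
  shows "det A dvd 1"
proof -
  obtain r where r: "\<And>j' j. j' < n \<Longrightarrow> j < n \<Longrightarrow>
      (\<Sum>i<n. r j' i * A $$ (i,j)) = (if j = j' then 1 else 0)"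
    using span by metis
  define R where "R = mat n n (\<lambda>(j',i). r j' i)"
  have R: "R \<in> carrier_mat n n" unfolding R_def by simp
  have "R * A = 1\<^sub>m n"
    by (rule eq_matI) (use A r in \<open>auto simp: R_def scalar_prod_def lessThan_atLeast0\<close>)
  then have "det R * det A = 1" using det_mult[OF R A] by simp
  then show ?thesis by (metis dvdI mult.commute)
qed

lemma bezout_monom_bounded:
  fixes f g a b :: "'a::idom poly"
  assumes monic: "lead_coeff f = 1" and bezout: "a * f + b * g = 1"
    and k: "k < degree f + degree g"
  obtains u v where "u * f + v * g = monom 1 k"
    and "\<And>i. i \<ge> degree g \<Longrightarrow> coeff u i = 0" and "\<And>i. i \<ge> degree f \<Longrightarrow> coeff v i = 0"
proof -
  have f0: "f \<noteq> 0" using monic by auto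
  obtain s v where sv: "pseudo_divmod (monom 1 k * b) f = (s, v)" by fastforce
  have div: "monom 1 k * b = f * s + v" and v: "v = 0 \<or> degree v < degree f"
    using pseudo_divmod[OF f0 sv] monic by auto
  define u where "u = monom 1 k * a + s * g"
  have "u * f + v * g = monom 1 k * a * f + (f * s + v) * g"
    by (simp add: u_def algebra_simps)
  also have "\<dots> = monom 1 k * (a * f + b * g)"
    unfolding div[symmetric] by (simp add: algebra_simps)
  finally have uv: "u * f + v * g = monom 1 k" using bezout by simp
  have "degree (u * f) < degree f + degree g"
  proof -
    have "degree (v * g) < degree f + degree g"
    proof (cases "v = 0")
      case False
      then show ?thesis using v degree_mult_le[of v g] by linarith
    qed (use k in \<open>simp; arith\<close>)
    moreover have "u * f = monom 1 k - v * g" using uv by (simp add: algebra_simps)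
    ultimately show ?thesis
      using k degree_diff_le_max[of "monom (1::'a) k" "v * g"] by (simp add: degree_monom_eq)
  qed
  then have "u = 0 \<or> degree u < degree g"
    using f0 by (cases "u = 0") (auto simp: degree_mult_eq)
  then have "coeff u i = 0" if "i \<ge> degree g" for i
    using that by (auto intro: coeff_eq_0)
  moreover have "coeff v i = 0" if "i \<ge> degree f" for i
    using v that by (auto intro: coeff_eq_0)
  ultimately show ?thesis using that[OF uv] by blast
qed

lemma resultant_dvd_1_if_bezout:
  fixes f g a b :: "'a::idom poly"
  assumes monic: "lead_coeff f = 1" and bezout: "a * f + b * g = 1"
  shows "resultant f g dvd 1"
  unfolding resultant_def
proof (rule det_dvd_1_if_unit_vectors_in_row_span[OF sylvester_carrier_mat])
  define D where "D = degree f + degree g"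
  fix j' assume j': "j' < degree f + degree g"
  obtain u v where uv: "u * f + v * g = monom 1 (D - 1 - j')"
    and u: "\<And>i. i \<ge> degree g \<Longrightarrow> coeff u i = 0" and v: "\<And>i. i \<ge> degree f \<Longrightarrow> coeff v i = 0"
    by (rule bezout_monom_bounded[OF monic bezout, of "D - 1 - j'"]) (use j' in \<open>auto simp: D_def\<close>)
  \<comment> \<open>Bounded coefficients of x^(D - 1 - j') give the row combination equal to the
    unit vector e_j'.\<close>
  define r where "r i = (if i < degree g then coeff u (degree g - 1 - i) else coeff v (D - 1 - i))"
    for i
  have "(\<Sum>i<degree g. monom (r i) (degree g - 1 - i)) = u"
    using sum_monom_coeff_reversed[of "degree g" u 0, OF u] by (simp add: r_def atLeast0LessThan)
  moreover have "(\<Sum>i\<in>{degree g..<D}. monom (r i) (D - 1 - i)) = v"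
    using sum_monom_coeff_reversed[of "degree f" v "degree g", OF v] by (simp add: r_def D_def)
  ultimately have "(\<Sum>i<D. smult (r i) (sylvester_row f g i)) = monom 1 1 * (u * f + v * g)"
    using sum_smult_sylvester_row[of r f g, folded D_def] by simp
  also have "\<dots> = monom 1 (D - j')" using j' by (simp add: uv mult_monom D_def Suc_diff_Suc)
  finally have P: "(\<Sum>i<D. smult (r i) (sylvester_row f g i)) = monom 1 (D - j')" .
  show "\<exists>r. \<forall>j<degree f + degree g.
      (\<Sum>i<degree f + degree g. r i * sylvester_mat f g $$ (i, j)) = (if j = j' then 1 else 0)"
  proof (intro exI[of _ r] allI impI)
    fix j assume "j < degree f + degree g"
    then show "(\<Sum>i<degree f + degree g. r i * sylvester_mat f g $$ (i, j)) = (if j = j' then 1 else 0)"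
      using coeff_sum_smult_sylvester_row[of j f g r] P j' unfolding D_def by (auto simp: coeff_monom split: if_split_asm)
  qed
qed

section \<open>Minimal polynomials over the integers\<close>

abbreviation ipoly :: "int poly \<Rightarrow> 'a::comm_ring_1 \<Rightarrow> 'a" where
  "ipoly p x \<equiv> poly (of_int_poly p) x"

lemma cnj_ipoly: "cnj (ipoly p z) = ipoly p (cnj z)"
  by (induction p) (simp_all add: hom_distribs)

lemma ipoly_eq_0_imp_degree_pos:
  assumes "p \<noteq> 0" "ipoly p (x::'a::{comm_ring_1,ring_char_0}) = 0"
  shows "degree p > 0"
  using assms by (cases p) (auto simp: hom_distribs split: if_splits)

lemma resultant_eq_0_if_common_root:
  assumes "ipoly f x = 0" "ipoly g x = (0::'a::{comm_ring_1,ring_char_0})" "degree f + degree g > 0"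
  shows "resultant f g = 0"
proof -
  obtain u v where "u * f + v * g = [:resultant f g:]"
    using assms(3) by (rule resultant_bezout)
  from arg_cong[OF this, of "\<lambda>p. ipoly p x"] show ?thesis
    using assms(1,2) by (simp add: hom_distribs)
qed

lemma is_min_int_poly_degree_pos: "is_min_int_poly g z \<Longrightarrow> degree g > 0"
  unfolding is_min_int_poly_def by (intro ipoly_eq_0_imp_degree_pos) auto

lemma is_min_int_poly_dvd:
  assumes g: "is_min_int_poly g z" and p: "ipoly p z = 0"
  shows "g dvd p"
proof -
  have irr: "irreducible g" using g unfolding is_min_int_poly_def by simp
  have "resultant g p = 0"
    using g p is_min_int_poly_degree_pos[OF g]
    by (intro resultant_eq_0_if_common_root[of _ z]) (auto simp: is_min_int_poly_def)
  then have "degree (gcd g p) \<noteq> 0" by (simp add: resultant_0_gcd)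
  then have "\<not> gcd g p dvd 1" by (auto simp: is_unit_poly_iff)
  moreover obtain h where h: "g = gcd g p * h" by (meson dvdE gcd_dvd1)
  ultimately have "h dvd 1" using irreducibleD[OF irr h] by simp
  then have "g dvd gcd g p" by (subst h) (simp add: mult_unit_dvd_iff)
  then show ?thesis using dvd_trans gcd_dvd2 by blast
qed

lemma is_min_int_poly_monic:
  assumes g: "is_min_int_poly g z" and z: "alg_integer z"
  shows "lead_coeff g = 1"
proof -
  obtain p where p: "lead_coeff p = 1" "ipoly p z = 0" using z unfolding alg_integer_def by blast
  then obtain h where "p = g * h" using is_min_int_poly_dvd[OF g] by blast
  then have "lead_coeff g dvd 1" using p(1) by (metis dvdI lead_coeff_mult)
  then show ?thesis using g unfolding is_min_int_poly_def by (simp add: zdvd1_eq)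
qed

section \<open>Algebraic integers in number fields\<close>

lemma alg_integer_iff_algebraic_int: "alg_integer x \<longleftrightarrow> algebraic_int x"
  by (auto simp: alg_integer_def algebraic_int_altdef_ipoly)

lemma CM_field_subfield_C: "CM_field K \<Longrightarrow> subfield_C K"
  by (simp add: CM_field_def number_field_def)

lemma subfield_C_of_int: "subfield_C K \<Longrightarrow> of_int m \<in> K"
proof -
  assume K: "subfield_C K"
  have "of_nat k \<in> K" for k by (induction k) (use K in \<open>auto simp: subfield_C_def\<close>)
  then show "of_int m \<in> K"
    using K unfolding subfield_C_def by (cases m rule: int_cases) (auto simp del: of_nat_Suc)
qed

lemma subfield_C_power: "subfield_C K \<Longrightarrow> x \<in> K \<Longrightarrow> x ^ i \<in> K"
  by (induction i) (auto simp: subfield_C_def)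

interpretation rat_vs: vector_space "\<lambda>(r::rat) (z::complex). of_rat r * z"
  by unfold_locales (auto simp: algebra_simps of_rat_add of_rat_mult)

lemma algebraic_if_rat_dependent_powers:
  assumes A: "finite A" and inj: "inj_on (\<lambda>i. x ^ i) A"
    and dep: "rat_vs.dependent ((\<lambda>i. x ^ i) ` A)"
  shows "algebraic x"
proof -
  obtain t u where tu: "t \<subseteq> (\<lambda>i. x ^ i) ` A" "(\<Sum>v\<in>t. of_rat (u v) * v) = 0" "\<exists>v\<in>t. u v \<noteq> 0"
    using dep unfolding rat_vs.dependent_explicit by blast
  define I where "I = {i \<in> A. x ^ i \<in> t}"
  have t: "t = (\<lambda>i. x ^ i) ` I" and inj_I: "inj_on (\<lambda>i. x ^ i) I"
    using tu(1) inj unfolding I_def by (auto intro: inj_on_subset)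
  define p where "p = (\<Sum>i\<in>I. monom (of_rat (u (x ^ i)) :: complex) i)"
  have coeff_p: "coeff p i = (if i \<in> I then of_rat (u (x ^ i)) else 0)" for i
    using A by (simp add: p_def coeff_sum coeff_monom I_def)
  show ?thesis
  proof (rule algebraicI')
    show "coeff p i \<in> \<rat>" for i by (simp add: coeff_p)
    show "p \<noteq> 0" using tu(3) coeff_p unfolding t by (metis image_iff of_rat_eq_0_iff coeff_0)
    have "poly p x = (\<Sum>i\<in>I. of_rat (u (x ^ i)) * x ^ i)"
      by (simp add: p_def poly_sum poly_monom)
    also have "\<dots> = 0" using tu(2) unfolding t sum.reindex[OF inj_I] by simp
    finally show "poly p x = 0" .
  qed
qed

lemma number_field_algebraic:
  assumes K: "number_field K" and x: "x \<in> K"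
  shows "algebraic x"
proof -
  obtain B where B: "finite B" "\<forall>y\<in>K. \<exists>c. y = (\<Sum>b\<in>B. of_rat (c b) * b)"
    using K unfolding number_field_def by blast
  have span: "K \<subseteq> rat_vs.span B"
  proof
    fix y assume "y \<in> K"
    then obtain c where "y = (\<Sum>b\<in>B. of_rat (c b) * b)" using B(2) by blast
    then show "y \<in> rat_vs.span B"
      by (simp add: rat_vs.span_sum rat_vs.span_scale rat_vs.span_base)
  qed
  show ?thesis
  proof (cases "inj_on (\<lambda>i. x ^ i) {..card B}")
    case False
    then obtain i j where ij: "i < j" "x ^ i = x ^ j"
      unfolding inj_on_def by (metis linorder_neqE_nat)
    show ?thesis
      by (rule algebraicI[of "monom 1 j - monom 1 i"])
        (use ij in \<open>auto simp: poly_monom monom_eq_iff'\<close>)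
  next
    case True
    have "card ((\<lambda>i. x ^ i) ` {..card B}) = Suc (card B)" using card_image[OF True] by simp
    moreover have "(\<lambda>i. x ^ i) ` {..card B} \<subseteq> rat_vs.span B"
      using span subfield_C_power K x by (auto simp: number_field_def)
    ultimately have "rat_vs.dependent ((\<lambda>i. x ^ i) ` {..card B})"
      using rat_vs.independent_span_bound[OF B(1)] by fastforce
    then show ?thesis by (rule algebraic_if_rat_dependent_powers[OF finite_atMost True])
  qed
qed

lemma poly_rescaled_monic:
  fixes p :: "'a::comm_ring_1 poly"
  assumes d: "degree p = d" "d > 0" and c: "lead_coeff p = c"
  shows "poly (monom 1 d + (\<Sum>i<d. monom (coeff p i * c ^ (d - 1 - i)) i)) (c * x)
       = c ^ (d - 1) * poly p x"
proof -
  have "coeff p i * c ^ (d - 1 - i) * (c * x) ^ i = c ^ (d - 1) * (coeff p i * x ^ i)"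
    if "i < d" for i
  proof -
    have "d - 1 = (d - 1 - i) + i" using that by simp
    then have "c ^ (d - 1) = c ^ (d - 1 - i) * c ^ i" by (metis power_add)
    then show ?thesis by (simp add: power_mult_distrib mult_ac)
  qed
  then have "(\<Sum>i<d. coeff p i * c ^ (d - 1 - i) * (c * x) ^ i) = c ^ (d - 1) * (\<Sum>i<d. coeff p i * x ^ i)"
    unfolding sum_distrib_left by (intro sum.cong refl) simp
  moreover have "(c * x) ^ d = c ^ (d - 1) * (c * x ^ d)"
    using d(2) by (cases d) (simp_all add: power_mult_distrib mult_ac)
  moreover have "c * x ^ d + (\<Sum>i<d. coeff p i * x ^ i) = poly p x"
    using d c by (simp add: poly_altdef lessThan_Suc_atMost[symmetric])
  ultimately show ?thesis
    by (simp add: poly_sum poly_monom) (metis distrib_left)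
qed

lemma algebraic_imp_algebraic_int_multiple:
  fixes x :: "'a::field_char_0"
  assumes "algebraic x"
  obtains m :: int where "m \<noteq> 0" "algebraic_int (of_int m * x)"
proof -
  obtain p where p: "\<And>i. coeff p i \<in> \<int>" "p \<noteq> 0" "poly p x = 0"
    by (rule algebraicE[OF assms]) blast
  define d where "d = degree p"
  define c where "c = lead_coeff p"
  have "c \<noteq> 0" using p(2) unfolding c_def by simp
  moreover obtain m where m: "c = of_int m" using p(1) unfolding c_def by (metis Ints_cases)
  ultimately have "m \<noteq> 0" by simp
  have "d > 0"
  proof (rule ccontr)
    assume "\<not> d > 0"
    then have "p = [:c:]" using degree_0_id[of p] unfolding d_def c_def by simp
    then show False using p(3) \<open>c \<noteq> 0\<close> by simp
  qed
  define r where "r = monom 1 d + (\<Sum>i<d. monom (coeff p i * c ^ (d - 1 - i)) i)"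
  have coeff_r: "coeff r i = (if i = d then 1 else if i < d then coeff p i * c ^ (d - 1 - i) else 0)" for i
    by (simp add: r_def coeff_sum coeff_monom)
  have "degree r = d"
    by (intro antisym degree_le le_degree) (auto simp: coeff_r)
  then have "lead_coeff r = 1" by (simp add: coeff_r)
  moreover have "coeff r i \<in> \<int>" for i
    using p(1) unfolding coeff_r c_def by (simp add: Ints_mult Ints_power)
  moreover have "poly r (c * x) = 0"
    using poly_rescaled_monic[OF d_def[symmetric] \<open>d > 0\<close> c_def[symmetric]] p(3) by (simp add: r_def)
  ultimately have "algebraic_int (c * x)"
    by (intro algebraic_int.intros[of r]) auto
  then show ?thesis using that \<open>m \<noteq> 0\<close> m by blast
qed

lemma ring_of_integers_0_1:
  assumes "subfield_C K" shows "0 \<in> ring_of_integers K" "1 \<in> ring_of_integers K"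
  using assms by (auto simp: ring_of_integers_def alg_integer_iff_algebraic_int subfield_C_def)

lemma number_field_int_multiple_in_ring_of_integers:
  assumes K: "number_field K" and x: "x \<in> K"
  obtains m :: int where "m \<noteq> 0" "of_int m * x \<in> ring_of_integers K"
proof -
  obtain m :: int where m: "m \<noteq> 0" "algebraic_int (of_int m * x)"
    using algebraic_imp_algebraic_int_multiple[OF number_field_algebraic[OF K x]] .
  moreover have "of_int m * x \<in> K"
    using K x subfield_C_of_int[of K m] by (auto simp: number_field_def subfield_C_def)
  ultimately show ?thesis
    using that by (auto simp: ring_of_integers_def alg_integer_iff_algebraic_int)
qed

lemma int_alg2_subset_Reals: "cnj a = a \<Longrightarrow> int_alg2 a (cnj a) \<subseteq> \<real>"
  by (auto simp: int_alg2_def Reals_cnj_iff cnj_sum)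

lemma weil_generator_not_real:
  assumes K: "CM_field K" and a: "weil_generator K a"
  shows "cnj a \<noteq> a"
proof
  assume real: "cnj a = a"
  obtain x where x: "x \<in> K" "x \<notin> \<real>" using K unfolding CM_field_def by blast
  obtain m :: int where m: "m \<noteq> 0" "of_int m * x \<in> ring_of_integers K"
    using K x number_field_int_multiple_in_ring_of_integers unfolding CM_field_def by blast
  then have "of_int m * x \<in> \<real>"
    using a int_alg2_subset_Reals[OF real] unfolding weil_generator_def by blast
  moreover have "x = of_int m * x / of_int m" using m(1) by simp
  ultimately show False using x(2) by (metis Reals_divide Reals_of_int)
qed

section \<open>The rings generated by a number and its conjugate\<close>

definition int_alg2_on :: "nat \<Rightarrow> (nat \<Rightarrow> complex) \<Rightarrow> (nat \<Rightarrow> complex) \<Rightarrow> bool" where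
  "int_alg2_on n a f \<longleftrightarrow> (\<exists>N (c :: nat \<times> nat \<Rightarrow> int). \<forall>k<n.
      f k = (\<Sum>p\<in>{..<N} \<times> {..<N}. of_int (c p) * a k ^ fst p * cnj (a k) ^ snd p))"

lemma int_alg2_on_iff_double_sum:
  "int_alg2_on n a f \<longleftrightarrow> (\<exists>N (c :: nat \<Rightarrow> nat \<Rightarrow> int). \<forall>k<n.
      f k = (\<Sum>i<N. \<Sum>j<N. of_int (c i j) * a k ^ i * cnj (a k) ^ j))"
proof
  assume "int_alg2_on n a f"
  then obtain N c where "\<forall>k<n.
      f k = (\<Sum>p\<in>{..<N} \<times> {..<N}. of_int (c p) * a k ^ fst p * cnj (a k) ^ snd p)"
    unfolding int_alg2_on_def by blast
  then show "\<exists>N (c :: nat \<Rightarrow> nat \<Rightarrow> int). \<forall>k<n.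
      f k = (\<Sum>i<N. \<Sum>j<N. of_int (c i j) * a k ^ i * cnj (a k) ^ j)"
    by (intro exI[of _ N] exI[of _ "\<lambda>i j. c (i, j)"]) (simp add: sum.cartesian_product case_prod_beta)
next
  assume "\<exists>N (c :: nat \<Rightarrow> nat \<Rightarrow> int). \<forall>k<n.
      f k = (\<Sum>i<N. \<Sum>j<N. of_int (c i j) * a k ^ i * cnj (a k) ^ j)"
  then obtain N c where "\<forall>k<n. f k = (\<Sum>i<N. \<Sum>j<N. of_int (c i j) * a k ^ i * cnj (a k) ^ j)"
    by blast
  then show "int_alg2_on n a f"
    unfolding int_alg2_on_def
    by (intro exI[of _ N] exI[of _ "case_prod c"]) (simp add: sum.cartesian_product case_prod_beta)
qed

lemma prod_int_alg2_iff:
  "x \<in> prod_int_alg2 n a \<longleftrightarrow> int_alg2_on n a x \<and> (\<forall>k\<ge>n. x k = 0)"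
proof
  assume "x \<in> prod_int_alg2 n a"
  then show "int_alg2_on n a x \<and> (\<forall>k\<ge>n. x k = 0)"
    unfolding prod_int_alg2_def int_alg2_on_iff_double_sum by auto blast
next
  assume "int_alg2_on n a x \<and> (\<forall>k\<ge>n. x k = 0)"
  then obtain N c where "\<forall>k<n. x k = (\<Sum>i<N. \<Sum>j<N. of_int (c i j) * a k ^ i * cnj (a k) ^ j)"
    and "\<forall>k\<ge>n. x k = 0"
    unfolding int_alg2_on_iff_double_sum by blast
  then show "x \<in> prod_int_alg2 n a"
    unfolding prod_int_alg2_def by (intro CollectI exI[of _ N] exI[of _ c]) (auto simp: fun_eq_iff)
qed

lemma int_alg2_iff: "y \<in> int_alg2 a (cnj a) \<longleftrightarrow> int_alg2_on 1 (\<lambda>_. a) (\<lambda>_. y)"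
  unfolding int_alg2_def int_alg2_on_iff_double_sum by auto

lemma int_alg2_on_cong:
  "int_alg2_on n a f \<Longrightarrow> (\<And>k. k < n \<Longrightarrow> f k = g k) \<Longrightarrow> int_alg2_on n a g"
  unfolding int_alg2_on_def by auto

lemma int_alg2_on_sum_monomials:
  fixes X :: "'x set" and d :: "'x \<Rightarrow> int"
  assumes "finite X"
  shows "int_alg2_on n a (\<lambda>k. \<Sum>x\<in>X. of_int (d x) * a k ^ s x * cnj (a k) ^ t x)"
proof -
  define e where "e x = (s x, t x)" for x
  define N where "N = Suc (Max (insert 0 (s ` X \<union> t ` X)))"
  define c where "c p = (\<Sum>x\<in>{x\<in>X. e x = p}. d x)" for p
  have in_range: "e ` X \<subseteq> {..<N} \<times> {..<N}"
    using assms by (auto simp: e_def N_def less_Suc_eq_le)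
  have c0: "c p = 0" if "p \<notin> e ` X" for p
  proof -
    have "{x\<in>X. e x = p} = {}" using that by force
    then show ?thesis unfolding c_def by (simp only: sum.empty)
  qed
  show ?thesis unfolding int_alg2_on_def
  proof (intro exI allI impI)
    fix k
    let ?m = "\<lambda>p. a k ^ fst p * cnj (a k) ^ snd p"
    have "(\<Sum>x\<in>X. of_int (d x) * a k ^ s x * cnj (a k) ^ t x) = (\<Sum>x\<in>X. of_int (d x) * ?m (e x))"
      by (simp add: e_def mult.assoc)
    also have "\<dots> = (\<Sum>p\<in>e ` X. \<Sum>x\<in>{x\<in>X. e x = p}. of_int (d x) * ?m (e x))"
      by (rule sum.image_gen[OF assms])
    also have "\<dots> = (\<Sum>p\<in>e ` X. of_int (c p) * ?m p)"
      unfolding c_def of_int_sum sum_distrib_right by (intro sum.cong refl) auto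
    also have "\<dots> = (\<Sum>p\<in>{..<N} \<times> {..<N}. of_int (c p) * ?m p)"
      by (rule sum.mono_neutral_left) (use in_range c0 in auto)
    finally show "(\<Sum>x\<in>X. of_int (d x) * a k ^ s x * cnj (a k) ^ t x) =
        (\<Sum>p\<in>{..<N} \<times> {..<N}. of_int (c p) * a k ^ fst p * cnj (a k) ^ snd p)"
      by (simp add: mult.assoc)
  qed
qed

lemma int_alg2_on_add:
  assumes "int_alg2_on n a f" "int_alg2_on n a g"
  shows "int_alg2_on n a (\<lambda>k. f k + g k)"
proof -
  obtain N c where f: "\<And>k. k < n \<Longrightarrow>
      f k = (\<Sum>p\<in>{..<N}\<times>{..<N}. of_int (c p) * a k ^ fst p * cnj (a k) ^ snd p)"
    using assms(1) unfolding int_alg2_on_def by blast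
  obtain M e where g: "\<And>k. k < n \<Longrightarrow>
      g k = (\<Sum>p\<in>{..<M}\<times>{..<M}. of_int (e p) * a k ^ fst p * cnj (a k) ^ snd p)"
    using assms(2) unfolding int_alg2_on_def by blast
  have "int_alg2_on n a (\<lambda>k. \<Sum>x\<in>{..<N}\<times>{..<N} <+> {..<M}\<times>{..<M}.
      of_int (case_sum c e x) * a k ^ case_sum fst fst x * cnj (a k) ^ case_sum snd snd x)"
    by (rule int_alg2_on_sum_monomials) auto
  then show ?thesis by (rule int_alg2_on_cong) (simp add: sum.Plus f g)
qed

lemma int_alg2_on_mult:
  assumes "int_alg2_on n a f" "int_alg2_on n a g"
  shows "int_alg2_on n a (\<lambda>k. f k * g k)"
proof -
  obtain N c where f: "\<And>k. k < n \<Longrightarrow>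
      f k = (\<Sum>p\<in>{..<N}\<times>{..<N}. of_int (c p) * a k ^ fst p * cnj (a k) ^ snd p)"
    using assms(1) unfolding int_alg2_on_def by blast
  obtain M e where g: "\<And>k. k < n \<Longrightarrow>
      g k = (\<Sum>p\<in>{..<M}\<times>{..<M}. of_int (e p) * a k ^ fst p * cnj (a k) ^ snd p)"
    using assms(2) unfolding int_alg2_on_def by blast
  have "int_alg2_on n a (\<lambda>k. \<Sum>x\<in>({..<N}\<times>{..<N}) \<times> ({..<M}\<times>{..<M}).
      of_int (c (fst x) * e (snd x)) * a k ^ (fst (fst x) + fst (snd x))
        * cnj (a k) ^ (snd (fst x) + snd (snd x)))"
    by (rule int_alg2_on_sum_monomials) auto
  then show ?thesis
  proof (rule int_alg2_on_cong)
    fix k assume "k < n"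
    then show "(\<Sum>x\<in>({..<N}\<times>{..<N}) \<times> ({..<M}\<times>{..<M}).
      of_int (c (fst x) * e (snd x)) * a k ^ (fst (fst x) + fst (snd x))
        * cnj (a k) ^ (snd (fst x) + snd (snd x))) = f k * g k"
      unfolding f[OF \<open>k < n\<close>] g[OF \<open>k < n\<close>] sum_product sum.cartesian_product
      by (intro sum.cong refl) (auto simp: power_add mult_ac)
  qed
qed

lemma int_alg2_on_of_int: "int_alg2_on n a (\<lambda>k. of_int m)"
  and int_alg2_on_gen: "int_alg2_on n a a"
  and int_alg2_on_cnj: "int_alg2_on n a (\<lambda>k. cnj (a k))"
  using int_alg2_on_sum_monomials[of "{()}" n a "\<lambda>_. m" "\<lambda>_. 0" "\<lambda>_. 0"]
    int_alg2_on_sum_monomials[of "{()}" n a "\<lambda>_. 1" "\<lambda>_. 1" "\<lambda>_. 0"]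
    int_alg2_on_sum_monomials[of "{()}" n a "\<lambda>_. 1" "\<lambda>_. 0" "\<lambda>_. 1"]
  by simp_all

lemma int_alg2_on_ipoly_trace: "int_alg2_on n a (\<lambda>k. ipoly p (a k + cnj (a k)))"
proof (induction p)
  case 0
  then show ?case using int_alg2_on_of_int[of n a 0] by simp
next
  case (pCons c p)
  have "int_alg2_on n a (\<lambda>k. of_int c + (a k + cnj (a k)) * ipoly p (a k + cnj (a k)))"
    by (intro int_alg2_on_add int_alg2_on_mult int_alg2_on_of_int int_alg2_on_gen int_alg2_on_cnj pCons.IH)
  then show ?case by (simp add: hom_distribs)
qed

definition trace_span :: "nat \<Rightarrow> (nat \<Rightarrow> complex) \<Rightarrow> (nat \<Rightarrow> complex) \<Rightarrow> bool" where
  "trace_span n a f \<longleftrightarrow> (\<exists>P Q. \<forall>k<n.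
      f k = ipoly P (a k + cnj (a k)) + ipoly Q (a k + cnj (a k)) * a k)"

lemma trace_span_imp_int_alg2_on: "trace_span n a f \<Longrightarrow> int_alg2_on n a f"
  unfolding trace_span_def
  by (elim exE, rule int_alg2_on_cong[OF int_alg2_on_add[OF int_alg2_on_ipoly_trace
        int_alg2_on_mult[OF int_alg2_on_ipoly_trace int_alg2_on_gen]]]) auto

lemma trace_span_cong:
  "trace_span n a f \<Longrightarrow> (\<And>k. k < n \<Longrightarrow> f k = g k) \<Longrightarrow> trace_span n a g"
  unfolding trace_span_def by auto

lemma trace_span_of_int: "trace_span n a (\<lambda>k. of_int m)"
  unfolding trace_span_def by (intro exI[of _ "[:m:]"] exI[of _ 0]) (simp add: hom_distribs)

lemma trace_span_gen: "trace_span n a a"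
  unfolding trace_span_def by (intro exI[of _ 0] exI[of _ 1]) simp

lemma trace_span_cnj: "trace_span n a (\<lambda>k. cnj (a k))"
  unfolding trace_span_def by (intro exI[of _ "[:0, 1:]"] exI[of _ "-1"]) (simp add: hom_distribs)

lemma trace_span_add:
  assumes "trace_span n a f" "trace_span n a g"
  shows "trace_span n a (\<lambda>k. f k + g k)"
proof -
  obtain P Q P' Q' where
    "\<forall>k<n. f k = ipoly P (a k + cnj (a k)) + ipoly Q (a k + cnj (a k)) * a k"
    "\<forall>k<n. g k = ipoly P' (a k + cnj (a k)) + ipoly Q' (a k + cnj (a k)) * a k"
    using assms unfolding trace_span_def by blast
  then show ?thesis
    unfolding trace_span_def
    by (intro exI[of _ "P + P'"] exI[of _ "Q + Q'"]) (simp add: hom_distribs algebra_simps)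
qed

text \<open>Products reduce via a^2 = (a + cnj a) a - q, which holds as a * cnj a = q.\<close>
lemma trace_span_mult:
  assumes norm: "\<forall>k<n. a k * cnj (a k) = of_int q"
    and "trace_span n a f" "trace_span n a g"
  shows "trace_span n a (\<lambda>k. f k * g k)"
proof -
  obtain P Q where f: "\<And>k. k < n \<Longrightarrow> f k = ipoly P (a k + cnj (a k)) + ipoly Q (a k + cnj (a k)) * a k"
    using assms(2) unfolding trace_span_def by blast
  obtain P' Q' where g: "\<And>k. k < n \<Longrightarrow> g k = ipoly P' (a k + cnj (a k)) + ipoly Q' (a k + cnj (a k)) * a k"
    using assms(3) unfolding trace_span_def by blast
  show ?thesis unfolding trace_span_def
  proof (intro exI allI impI)
    fix k assume k: "k < n"
    have "a k * a k = (a k + cnj (a k)) * a k - of_int q" using norm k by (simp add: algebra_simps)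
    then show "f k * g k = ipoly (P * P' - [:q:] * Q * Q') (a k + cnj (a k)) +
        ipoly (P * Q' + Q * P' + [:0, 1:] * Q * Q') (a k + cnj (a k)) * a k"
      unfolding f[OF k] g[OF k] by (simp add: hom_distribs algebra_simps)
  qed
qed

lemma trace_span_sum:
  "finite X \<Longrightarrow> (\<And>x. x \<in> X \<Longrightarrow> trace_span n a (F x)) \<Longrightarrow>
    trace_span n a (\<lambda>k. \<Sum>x\<in>X. F x k)"
  by (induction X rule: finite_induct) (use trace_span_of_int[of n a 0] in \<open>auto intro: trace_span_add\<close>)

lemma trace_span_power:
  assumes "\<forall>k<n. a k * cnj (a k) = of_int q" and "trace_span n a f"
  shows "trace_span n a (\<lambda>k. f k ^ m)"
  by (induction m) (use trace_span_of_int[of n a 1] trace_span_mult[OF assms(1) assms(2)] in auto)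

lemma int_alg2_on_imp_trace_span:
  assumes norm: "\<forall>k<n. a k * cnj (a k) = of_int q" and f: "int_alg2_on n a f"
  shows "trace_span n a f"
proof -
  obtain N c where "\<forall>k<n. f k = (\<Sum>p\<in>{..<N} \<times> {..<N}. of_int (c p) * a k ^ fst p * cnj (a k) ^ snd p)"
    using f unfolding int_alg2_on_def by blast
  moreover have "trace_span n a (\<lambda>k. \<Sum>p\<in>{..<N} \<times> {..<N}. of_int (c p) * a k ^ fst p * cnj (a k) ^ snd p)"
    by (intro trace_span_sum trace_span_mult[OF norm] trace_span_power[OF norm]
        trace_span_of_int trace_span_gen trace_span_cnj) auto
  ultimately show ?thesis by (auto intro: trace_span_cong)
qed

lemma int_alg2_on_iff_trace_span:
  "\<forall>k<n. a k * cnj (a k) = of_int q \<Longrightarrow> int_alg2_on n a f \<longleftrightarrow> trace_span n a f"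
  using int_alg2_on_imp_trace_span trace_span_imp_int_alg2_on by blast

section \<open>Weil generators of products\<close>

lemma weil_generator_prod_imp_weil_generator:
  assumes K: "\<forall>k<n. subfield_C (K k)" and W: "weil_generator_prod n K \<alpha>" and i: "i < n"
  shows "weil_generator (K i) (\<alpha> i)"
proof -
  have EQ: "prod_int_alg2 n \<alpha> = prod_ring_of_integers n K"
    using W unfolding weil_generator_prod_def by blast
  have "int_alg2 (\<alpha> i) (cnj (\<alpha> i)) = ring_of_integers (K i)"
  proof (intro equalityI subsetI)
    fix y assume "y \<in> int_alg2 (\<alpha> i) (cnj (\<alpha> i))"
    then obtain N c where y: "y = (\<Sum>a<N. \<Sum>b<N. of_int (c a b) * \<alpha> i ^ a * cnj (\<alpha> i) ^ b)"
      unfolding int_alg2_def by blast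
    define x where
      "x k = (if k < n then (\<Sum>a<N. \<Sum>b<N. of_int (c a b) * \<alpha> k ^ a * cnj (\<alpha> k) ^ b) else 0)"
      for k
    have "x \<in> prod_int_alg2 n \<alpha>" unfolding prod_int_alg2_def x_def by blast
    then show "y \<in> ring_of_integers (K i)"
      using EQ i y unfolding prod_ring_of_integers_def x_def by auto
  next
    fix y assume y: "y \<in> ring_of_integers (K i)"
    define x where "x k = (if k = i then y else 0)" for k
    have "x \<in> prod_ring_of_integers n K"
      using y i K ring_of_integers_0_1 unfolding prod_ring_of_integers_def x_def by auto
    then obtain N c where "x = (\<lambda>k. if k < n then
        (\<Sum>a<N. \<Sum>b<N. of_int (c a b) * \<alpha> k ^ a * cnj (\<alpha> k) ^ b) else 0)"
      using EQ unfolding prod_int_alg2_def by blast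
    then show "y \<in> int_alg2 (\<alpha> i) (cnj (\<alpha> i))"
      using i unfolding int_alg2_def by (auto simp: fun_eq_iff x_def dest!: spec[of _ i]) blast
  qed
  then show ?thesis
    using W i unfolding weil_generator_def weil_generator_prod_def by force
qed

lemma ipoly_trace_eq_if_real:
  assumes x: "x = ipoly P (a + cnj a) + ipoly Q (a + cnj a) * a"
    and real: "cnj x = x" and nonreal: "cnj a \<noteq> a"
  shows "x = ipoly P (a + cnj a)"
proof -
  have "cnj x = ipoly P (a + cnj a) + ipoly Q (a + cnj a) * cnj a"
    unfolding x by (simp add: cnj_ipoly add.commute)
  with x real have "ipoly Q (a + cnj a) * (a - cnj a) = 0" by (simp add: algebra_simps)
  with nonreal show ?thesis using x by simp
qed

lemma weil_generator_prod_idempotent: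
  assumes cm: "\<forall>k<n. CM_field (K k)" and W: "weil_generator_prod n K \<alpha>" and i: "i < n"
  obtains P where "\<And>k. k < n \<Longrightarrow> ipoly P (\<alpha> k + cnj (\<alpha> k)) = (if k = i then 1 else 0)"
proof -
  obtain q where q: "\<forall>k<n. \<alpha> k * cnj (\<alpha> k) = of_int q"
    using W unfolding weil_generator_prod_def by blast
  have sf: "\<forall>k<n. subfield_C (K k)" using cm CM_field_subfield_C by blast
  define e where "e k = (if k = i then 1 else 0 :: complex)" for k
  have "e \<in> prod_ring_of_integers n K"
    using sf i ring_of_integers_0_1 unfolding prod_ring_of_integers_def e_def by auto
  then have "int_alg2_on n \<alpha> e"
    using W unfolding weil_generator_prod_def by (auto simp: prod_int_alg2_iff)
  then have "trace_span n \<alpha> e" using int_alg2_on_iff_trace_span[OF q] by blast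
  then obtain P Q where PQ: "\<And>k. k < n \<Longrightarrow>
      e k = ipoly P (\<alpha> k + cnj (\<alpha> k)) + ipoly Q (\<alpha> k + cnj (\<alpha> k)) * \<alpha> k"
    unfolding trace_span_def by blast
  have "e k = ipoly P (\<alpha> k + cnj (\<alpha> k))" if "k < n" for k
    using ipoly_trace_eq_if_real[OF PQ[OF that]] weil_generator_not_real[of "K k" "\<alpha> k"]
      weil_generator_prod_imp_weil_generator[OF sf W that] cm that
    by (simp add: e_def)
  then show ?thesis using that by (simp add: e_def)
qed

lemma weil_generator_prod_imp_resultant_unit:
  assumes cm: "\<forall>k<n. CM_field (K k)" and W: "weil_generator_prod n K \<alpha>"
    and g: "\<forall>k<n. is_min_int_poly (g k) (\<alpha> k + cnj (\<alpha> k))"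
    and i: "i < n" and j: "j < n" and ij: "i \<noteq> j"
  shows "\<bar>resultant (g i) (g j)\<bar> = 1"
proof -
  obtain P where P: "\<And>k. k < n \<Longrightarrow> ipoly P (\<alpha> k + cnj (\<alpha> k)) = (if k = i then 1 else 0)"
    using weil_generator_prod_idempotent[OF cm W i] by blast
  obtain A where A: "P - 1 = g i * A"
    using is_min_int_poly_dvd[of "g i" "\<alpha> i + cnj (\<alpha> i)" "P - 1"] g i P[OF i] by (auto simp: hom_distribs)
  obtain B where B: "P = g j * B"
    using is_min_int_poly_dvd[of "g j" "\<alpha> j + cnj (\<alpha> j)" P] g j P[OF j] ij by auto
  have "\<alpha> i + cnj (\<alpha> i) \<in> int_alg2 (\<alpha> i) (cnj (\<alpha> i))"
    unfolding int_alg2_iff by (intro int_alg2_on_add int_alg2_on_gen int_alg2_on_cnj)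
  moreover have "weil_generator (K i) (\<alpha> i)"
    using weil_generator_prod_imp_weil_generator[OF _ W i] cm CM_field_subfield_C by blast
  ultimately have "alg_integer (\<alpha> i + cnj (\<alpha> i))"
    unfolding weil_generator_def ring_of_integers_def by auto
  then have monic: "lead_coeff (g i) = 1"
    using g i is_min_int_poly_monic by blast
  have "(- A) * g i + B * g j = 1" using A B by (simp add: algebra_simps)
  then have "resultant (g i) (g j) dvd 1" by (rule resultant_dvd_1_if_bezout[OF monic])
  then show ?thesis by simp
qed

lemma resultant_unit_imp_separating_ipoly:
  assumes res: "\<bar>resultant f g\<bar> = 1" and deg: "degree f + degree g > 0"
    and x: "ipoly f x = (0::complex)" and y: "ipoly g y = 0"
  obtains F where "ipoly F x = 1" "ipoly F y = 0"
proof -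
  obtain u v where uv: "u * f + v * g = [:resultant f g:]"
    using deg by (rule resultant_bezout)
  define R where "R = resultant f g"
  have "ipoly v x * ipoly g x = of_int R"
    using arg_cong[OF uv, of "\<lambda>p. ipoly p x"] x by (simp add: hom_distribs R_def)
  moreover have "R * R = 1" using res abs_mult_self_eq[of R] by (simp add: R_def)
  then have "(of_int R * of_int R :: complex) = 1" by (metis of_int_1 of_int_mult)
  ultimately have "ipoly (smult R (v * g)) x = 1" by (simp add: hom_distribs mult.assoc)
  moreover have "ipoly (smult R (v * g)) y = 0" using y by (simp add: hom_distribs)
  ultimately show ?thesis by (rule that)
qed

lemma ipoly_idempotents_from_resultants:
  fixes n :: nat
  assumes g: "\<forall>k<n. is_min_int_poly (g k) (b k)"
    and res: "\<forall>k<n. \<forall>l<n. k \<noteq> l \<longrightarrow> \<bar>resultant (g k) (g l)\<bar> = 1"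
  obtains E where "\<And>k l. k < n \<Longrightarrow> l < n \<Longrightarrow> ipoly (E k) (b l) = (if k = l then 1 else 0)"
proof -
  have "\<exists>F. ipoly F (b k) = 1 \<and> ipoly F (b l) = 0" if "k < n" "l < n" "k \<noteq> l" for k l
    using resultant_unit_imp_separating_ipoly[of "g k" "g l" "b k" "b l"] res g is_min_int_poly_degree_pos that
    unfolding is_min_int_poly_def by (metis add_gr_0)
  then obtain F where F: "\<And>k l. k < n \<Longrightarrow> l < n \<Longrightarrow> k \<noteq> l \<Longrightarrow>
      ipoly (F k l) (b k) = 1 \<and> ipoly (F k l) (b l) = 0"
    by metis
  define E where "E k = (\<Prod>l\<in>{..<n} - {k}. F k l)" for k
  have "ipoly (E k) (b l) = (if k = l then 1 else 0)" if "k < n" "l < n" for k l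
  proof (cases "k = l")
    case True
    then show ?thesis
      unfolding E_def of_int_poly_hom.hom_prod poly_prod using F that by (auto intro: prod.neutral)
  next
    case False
    then have "ipoly (F k l) (b l) = 0" using F that by blast
    then have "(\<Prod>l'\<in>{..<n} - {k}. ipoly (F k l') (b l)) = 0"
      by (intro prod_zero) (use False that in auto)
    then show ?thesis
      unfolding E_def of_int_poly_hom.hom_prod poly_prod using False by simp
  qed
  then show ?thesis by (rule that)
qed

lemma trace_span_from_components:
  assumes E: "\<And>k l. k < n \<Longrightarrow> l < n \<Longrightarrow>
      ipoly (E k) (a l + cnj (a l)) = (if k = l then 1 else 0)"
    and x: "\<And>k. k < n \<Longrightarrow> trace_span 1 (\<lambda>_. a k) (\<lambda>_. x k)"
  shows "trace_span n a x"
proof -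
  have "\<forall>k<n. \<exists>P Q. x k = ipoly P (a k + cnj (a k)) + ipoly Q (a k + cnj (a k)) * a k"
    using x unfolding trace_span_def by simp
  then obtain P Q where PQ: "\<And>k. k < n \<Longrightarrow>
      x k = ipoly (P k) (a k + cnj (a k)) + ipoly (Q k) (a k + cnj (a k)) * a k"
    by metis
  have collapse: "(\<Sum>k<n. ipoly (E k * h k) (a l + cnj (a l))) = ipoly (h l) (a l + cnj (a l))"
    if "l < n" for l h
  proof -
    have "(\<Sum>k<n. ipoly (E k * h k) (a l + cnj (a l))) =
        (\<Sum>k<n. if k = l then ipoly (h k) (a l + cnj (a l)) else 0)"
      using E[OF _ that] by (intro sum.cong) (simp_all add: hom_distribs)
    then show ?thesis using that by simp
  qed
  have "x l = ipoly (\<Sum>k<n. E k * P k) (a l + cnj (a l)) + ipoly (\<Sum>k<n. E k * Q k) (a l + cnj (a l)) * a l"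
    if "l < n" for l
    unfolding of_int_poly_hom.hom_sum poly_sum collapse[OF that] using PQ[OF that] .
  then show ?thesis unfolding trace_span_def by blast
qed

lemma prod_int_alg2_eq_prod_ring_of_integers:
  assumes WG: "\<forall>k<n. weil_generator (K k) (\<alpha> k)"
    and q: "\<forall>k<n. \<alpha> k * cnj (\<alpha> k) = of_int q"
    and g: "\<forall>k<n. is_min_int_poly (g k) (\<alpha> k + cnj (\<alpha> k))"
    and res: "\<forall>i<n. \<forall>j<n. i \<noteq> j \<longrightarrow> \<bar>resultant (g i) (g j)\<bar> = 1"
  shows "prod_int_alg2 n \<alpha> = prod_ring_of_integers n K"
proof (intro equalityI subsetI)
  fix x assume "x \<in> prod_int_alg2 n \<alpha>"
  then obtain N c where x: "x = (\<lambda>k. if k < n then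
      (\<Sum>a<N. \<Sum>b<N. of_int (c a b) * \<alpha> k ^ a * cnj (\<alpha> k) ^ b) else 0)"
    unfolding prod_int_alg2_def by blast
  then have "x k \<in> int_alg2 (\<alpha> k) (cnj (\<alpha> k))" if "k < n" for k
    using that unfolding int_alg2_def by auto
  then show "x \<in> prod_ring_of_integers n K"
    using WG x unfolding prod_ring_of_integers_def weil_generator_def by auto
next
  fix x assume x: "x \<in> prod_ring_of_integers n K"
  obtain E where E: "\<And>k l. k < n \<Longrightarrow> l < n \<Longrightarrow>
      ipoly (E k) (\<alpha> l + cnj (\<alpha> l)) = (if k = l then 1 else 0)"
    using ipoly_idempotents_from_resultants[OF g res] by blast
  have "trace_span 1 (\<lambda>_. \<alpha> k) (\<lambda>_. x k)" if "k < n" for k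
  proof (rule int_alg2_on_imp_trace_span)
    show "\<forall>k'<1. \<alpha> k * cnj (\<alpha> k) = of_int q" using q that by simp
    show "int_alg2_on 1 (\<lambda>_. \<alpha> k) (\<lambda>_. x k)"
      using x WG that unfolding prod_ring_of_integers_def weil_generator_def int_alg2_iff[symmetric]
      by auto
  qed
  then have "int_alg2_on n \<alpha> x"
    using trace_span_imp_int_alg2_on trace_span_from_components[OF E] by blast
  then show "x \<in> prod_int_alg2 n \<alpha>"
    using x unfolding prod_int_alg2_iff prod_ring_of_integers_def by auto
qed

lemma weil_generators_common_norm:
  fixes \<alpha> :: "nat \<Rightarrow> complex"
  assumes "\<forall>i<n. weil_generator (K i) (\<alpha> i)"
    and "\<forall>i<n. \<forall>j<n. \<alpha> i * cnj (\<alpha> i) = \<alpha> j * cnj (\<alpha> j)"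
  obtains q :: int where "\<forall>k<n. \<alpha> k * cnj (\<alpha> k) = of_int q"
proof (cases "n = 0")
  case False
  then have "\<alpha> 0 * cnj (\<alpha> 0) \<in> \<int>" using assms(1) unfolding weil_generator_def by simp
  then obtain q where q: "\<alpha> 0 * cnj (\<alpha> 0) = of_int q" by (rule Ints_cases)
  have "\<alpha> k * cnj (\<alpha> k) = of_int q" if "k < n" for k
    using assms(2) that False unfolding q[symmetric] by blast
  then show ?thesis using that by blast
qed (use that in simp)

theorem mainTheorem4:
  fixes n :: nat and K :: "nat \<Rightarrow> complex set" and \<alpha> :: "nat \<Rightarrow> complex"
    and g :: "nat \<Rightarrow> int poly"
  assumes "\<forall>i<n. CM_field (K i)"
    and "\<forall>i<n. \<alpha> i \<in> K i"
    and "\<forall>i<n. is_min_int_poly (g i) (\<alpha> i + cnj (\<alpha> i))"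
  shows "weil_generator_prod n K \<alpha> \<longleftrightarrow>
           (\<forall>i<n. weil_generator (K i) (\<alpha> i)) \<and>
           (\<forall>i<n. \<forall>j<n. \<alpha> i * cnj (\<alpha> i) = \<alpha> j * cnj (\<alpha> j)) \<and>
           (\<forall>i<n. \<forall>j<n. i \<noteq> j \<longrightarrow> \<bar>resultant (g i) (g j)\<bar> = 1)"
    (is "?W \<longleftrightarrow> ?gen \<and> ?norm \<and> ?res")
proof
  assume W: ?W
  have "\<forall>k<n. subfield_C (K k)" using assms(1) CM_field_subfield_C by blast
  then have ?gen using W weil_generator_prod_imp_weil_generator by blast
  moreover have ?norm using W unfolding weil_generator_prod_def by auto
  moreover have ?res using weil_generator_prod_imp_resultant_unit[OF assms(1) W assms(3)] by blast
  ultimately show "?gen \<and> ?norm \<and> ?res" by blast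
next
  assume "?gen \<and> ?norm \<and> ?res"
  then have gen: ?gen and norm: ?norm and res: ?res by blast+
  obtain q where q: "\<forall>k<n. \<alpha> k * cnj (\<alpha> k) = of_int q"
    using weil_generators_common_norm[OF gen norm] .
  show ?W
    unfolding weil_generator_prod_def
    using assms(2) q prod_int_alg2_eq_prod_ring_of_integers[OF gen q assms(3) res] by blast
qed

end
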